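(* Let $f:X\to\mathcal G$ be convex and $x_0\in\operatorname{dom}f$. For $x\in X$, $t\in\mathbb R$ put $x_t=x_0+t(x-x_0)$ and $I(x)=\operatorname{cl}\operatorname{co}\bigcup_{t\in(0,1)}f(x_t)$. Then $x_0$ solves the scalarized Minty inequality (for all $x\in X$ with $f(x)\ne f(x_0)$ there exists $z^*\in C^-\setminus\{0\}$ with $\varphi_{f,z^*}(x)\neq-\infty$ and $\varphi'_{f,z^*}(x,x_0-x)<0$) if and only if for all $x\in\operatorname{dom} f$: $$f(x)\ne f(x_0)\ \Longrightarrow\ I(x)\supseteq f(x)\ \text{ and }\ I(x)\ne f(x).$$
   Context: $X$ real linear space, $Z$ real locally convex Hausdorff space with dual $Z^*$, $C\subseteq Z$ closed convex cone, $0\in C$, $C^-=\{z^*:z^*(c)\le0\ \forall c\in C\}$, $C^-\setminus\{0\}\neq\emptyset$. $\mathcal G=\{A\subseteq Z:A=\operatorname{cl}\operatorname{co}(A+C)\}$; $A\oplus B=\operatorname{cl}\{a+b\}$, $tA=\{ta\}$ ($t>0$). $f$ convex: $f(tx_1+(1-t)x_2)\supseteq tf(x_1)\oplus(1-t)f(x_2)$; $\operatorname{dom}f=\{x:f(x)\ne\emptyset\}$. On $\overline{\mathbb R}$: inf-addition $\dot+$ ($(-\infty)\dot+(+\infty)=+\infty$), $r\ominus s=\inf\{t\in\mathbb R:r\le s\dot+t\}$ ($\inf\emptyset=+\infty$). $\varphi_{f,z^*}(x)=\inf\{-z^*(z):z\in f(x)\}$ ($+\infty$ if $f(x)=\emptyset$),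 $\varphi'_{f,z^*}(x,u)=\inf_{t>0}\frac1t(\varphi_{f,z^*}(x+tu)\ominus\varphi_{f,z^*}(x))$. *)

theory Defs
  imports "HOL-Analysis.Analysis"
begin

definition lc_tvs :: "'z::real_vector topology \<Rightarrow> bool" where
  "lc_tvs T \<longleftrightarrow> topspace T = UNIV \<and> Hausdorff_space T
     \<and> continuous_map (prod_topology T T) T (\<lambda>(x, y). x + y)
     \<and> continuous_map (prod_topology euclideanreal T) T (\<lambda>(a, x). a *\<^sub>R x)
     \<and> (\<forall>U. openin T U \<and> 0 \<in> U \<longrightarrow> (\<exists>V. openin T V \<and> convex V \<and> 0 \<in> V \<and> V \<subseteq> U))"

definition topdual :: "'z::real_vector topology \<Rightarrow> ('z \<Rightarrow> real) set" where
  "topdual T = {g. linear g \<and> continuous_map T euclideanreal g}"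

definition neg_dual_cone :: "'z::real_vector topology \<Rightarrow> 'z set \<Rightarrow> ('z \<Rightarrow> real) set" where
  "neg_dual_cone T C = {g \<in> topdual T. \<forall>c\<in>C. g c \<le> 0}"

text \<open>The space G of closed convex C-upper sets.\<close>
definition Gspace :: "'z::real_vector topology \<Rightarrow> 'z set \<Rightarrow> 'z set set" where
  "Gspace T C = {A. A = T closure_of (convex hull {a + c | a c. a \<in> A \<and> c \<in> C})}"

definition oplus_cl :: "'z::real_vector topology \<Rightarrow> 'z set \<Rightarrow> 'z set \<Rightarrow> 'z set" where
  "oplus_cl T A B = T closure_of {a + b | a b. a \<in> A \<and> b \<in> B}"

definition set_scale :: "real \<Rightarrow> 'z::real_vector set \<Rightarrow> 'z set" where
  "set_scale t A = (\<lambda>a. t *\<^sub>R a) ` A"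

definition set_convex_fun :: "'z::real_vector topology \<Rightarrow> ('x::real_vector \<Rightarrow> 'z set) \<Rightarrow> bool" where
  "set_convex_fun T f \<longleftrightarrow> (\<forall>x1 x2 t. 0 < t \<and> t < 1 \<longrightarrow>
      oplus_cl T (set_scale t (f x1)) (set_scale (1 - t) (f x2)) \<subseteq> f (t *\<^sub>R x1 + (1 - t) *\<^sub>R x2))"

definition sdom :: "('x \<Rightarrow> 'z set) \<Rightarrow> 'x set" where
  "sdom f = {x. f x \<noteq> {}}"

text \<open>Inf-addition on the extended reals: (-\<infinity>) + (+\<infinity>) = +\<infinity>.\<close>
definition inf_plus :: "ereal \<Rightarrow> ereal \<Rightarrow> ereal" where
  "inf_plus r s = (if r = \<infinity> \<or> s = \<infinity> then \<infinity> else r + s)"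

definition inf_minus :: "ereal \<Rightarrow> ereal \<Rightarrow> ereal" where
  "inf_minus r s = Inf {ereal t | t. r \<le> inf_plus s (ereal t)}"

definition scal_phi :: "('x \<Rightarrow> 'z set) \<Rightarrow> ('z \<Rightarrow> real) \<Rightarrow> 'x \<Rightarrow> ereal" where
  "scal_phi f g x = Inf ((\<lambda>z. ereal (- g z)) ` f x)"

definition scal_phi_dir :: "('x::real_vector \<Rightarrow> 'z set) \<Rightarrow> ('z \<Rightarrow> real) \<Rightarrow> 'x \<Rightarrow> 'x \<Rightarrow> ereal" where
  "scal_phi_dir f g x u =
     (INF t\<in>{0<..}. ereal (1 / t) * inf_minus (scal_phi f g (x + t *\<^sub>R u)) (scal_phi f g x))"

end

theory Submission
  imports Defs
begin

text \<open>
  Always \<open>f(x) \<subseteq> I(x)\<close>: for \<open>z \<in> f(x)\<close> and \<open>z\<^sub>0 \<in> f(x\<^sub>0)\<close>, convexity puts \<open>t z + (1 - t) z\<^sub>0\<close>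
  into \<open>f(x\<^sub>t)\<close>, and these points tend to \<open>z\<close> as \<open>t \<rightarrow> 1\<close>.
  If \<open>\<phi>\<close> (for a fixed \<open>z\<^sup>*\<close>) is finite at \<open>x\<close> and decreases from \<open>x\<close> towards \<open>x\<^sub>0\<close>, convexity of \<open>f\<close> yields a
  point of some \<open>f(x\<^sub>t)\<close>, \<open>0 < t < 1\<close>, with \<open>-z\<^sup>*\<close> below \<open>\<phi>(x)\<close>; it lies in \<open>I(x)\<close> but not in
  \<open>f(x)\<close>. Conversely, a point of \<open>I(x) - f(x)\<close> is strictly separated from the closed convex set
  \<open>f(x)\<close> by a continuous linear functional \<open>z\<^sup>*\<close> (Hahn--Banach for a Minkowski gauge), which lies
  in \<open>C\<^sup>-\<close> because \<open>f(x) + C \<subseteq> f(x)\<close>. As the closed half-space \<open>{z\<^sup>* \<le> sup z\<^sup>*(f(x))}\<close> does not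
  contain \<open>I(x)\<close>, some \<open>f(x\<^sub>t)\<close> leaves it, which is a descent of \<open>\<phi>\<close> towards \<open>x\<^sub>0\<close>. If
  \<open>f(x) = {}\<close>, then \<open>\<phi>(x) = \<infinity>\<close> and every \<open>z\<^sup>* \<noteq> 0\<close> works.
\<close>

section \<open>Locally convex spaces\<close>

lemma lc_tvs_topspace: "lc_tvs T \<Longrightarrow> topspace T = UNIV"
  by (simp add: lc_tvs_def)

lemma lc_tvs_continuous_affine:
  assumes "lc_tvs T"
  shows "continuous_map T T (\<lambda>y. a *\<^sub>R y + b)"
proof -
  have scale: "continuous_map (prod_topology euclideanreal T) T (\<lambda>(a, x). a *\<^sub>R x)"
   and plus: "continuous_map (prod_topology T T) T (\<lambda>(x, y). x + y)"
    using assms by (auto simp: lc_tvs_def)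
  have "continuous_map T (prod_topology euclideanreal T) (\<lambda>y. (a, y))"
    by (simp add: continuous_map_paired)
  from continuous_map_compose[OF this scale]
  have "continuous_map T T (\<lambda>y. a *\<^sub>R y)" by (simp add: o_def)
  then have "continuous_map T (prod_topology T T) (\<lambda>y. (a *\<^sub>R y, b))"
    using lc_tvs_topspace[OF assms] by (simp add: continuous_map_paired)
  from continuous_map_compose[OF this plus] show ?thesis by (simp add: o_def)
qed

lemma lc_tvs_continuous_line:
  assumes "lc_tvs T"
  shows "continuous_map euclideanreal T (\<lambda>t. t *\<^sub>R y + b)"
proof -
  have scale: "continuous_map (prod_topology euclideanreal T) T (\<lambda>(a, x). a *\<^sub>R x)"
   and plus: "continuous_map (prod_topology T T) T (\<lambda>(x, y). x + y)"
    using assms by (auto simp: lc_tvs_def)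
  have "continuous_map euclideanreal (prod_topology euclideanreal T) (\<lambda>t. (t, y))"
    using lc_tvs_topspace[OF assms] by (simp add: continuous_map_paired)
  from continuous_map_compose[OF this scale]
  have "continuous_map euclideanreal T (\<lambda>t. t *\<^sub>R y)" by (simp add: o_def)
  then have "continuous_map euclideanreal (prod_topology T T) (\<lambda>t. (t *\<^sub>R y, b))"
    using lc_tvs_topspace[OF assms] by (simp add: continuous_map_paired)
  from continuous_map_compose[OF this plus] show ?thesis by (simp add: o_def)
qed

lemma lc_tvs_openin_affine_vimage:
  assumes "lc_tvs T" "openin T U"
  shows "openin T {y. a *\<^sub>R y + b \<in> U}"
  using openin_continuous_map_preimage[OF lc_tvs_continuous_affine[OF assms(1)] assms(2)]
    lc_tvs_topspace[OF assms(1)]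
  by simp

lemma lc_tvs_absorbing:
  assumes "lc_tvs T" "openin T U" "b \<in> U"
  shows "\<exists>d>0. \<forall>t. \<bar>t\<bar> < d \<longrightarrow> t *\<^sub>R y + b \<in> U"
proof -
  have "open {t. t *\<^sub>R y + b \<in> U}"
    using openin_continuous_map_preimage[OF lc_tvs_continuous_line[OF assms(1)] assms(2)]
    by simp
  moreover have "0 \<in> {t. t *\<^sub>R y + b \<in> U}" using assms by simp
  ultimately obtain d where "d > 0" "ball 0 d \<subseteq> {t. t *\<^sub>R y + b \<in> U}"
    using open_contains_ball by blast
  then show ?thesis by (auto simp: dist_real_def subset_iff)
qed

lemma lc_tvs_openin_differences:
  assumes "lc_tvs T" "openin T W"
  shows "openin T (\<Union>v\<in>V. \<Union>w\<in>W. {v - w})"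
proof -
  have "(\<Union>v\<in>V. \<Union>w\<in>W. {v - w}) = (\<Union>v\<in>V. {y. (-1) *\<^sub>R y + v \<in> W})"
    by (auto simp: algebra_simps) (metis add.commute diff_add_cancel)
  moreover have "openin T {y. (-1) *\<^sub>R y + v \<in> W}" for v
    using lc_tvs_openin_affine_vimage[OF assms] .
  ultimately show ?thesis by (metis (no_types, lifting) openin_Union imageE)
qed

lemma topdual_halfspace_le:
  assumes "lc_tvs T" "g \<in> topdual T"
  shows "closedin T {y. g y \<le> c}" "convex {y. g y \<le> c}"
proof -
  have "closedin T {y \<in> topspace T. g y \<in> {..c}}"
    using assms(2) by (intro closedin_continuous_map_preimage) (auto simp: topdual_def)
  then show "closedin T {y. g y \<le> c}" by (simp add: lc_tvs_topspace[OF assms(1)])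
  have "convex (g -` {..c})"
    using assms(2) by (intro convex_linear_vimage) (auto simp: topdual_def)
  then show "convex {y. g y \<le> c}" by (simp add: vimage_def)
qed

section \<open>Hahn--Banach for a sublinear functional\<close>

text \<open>A partial linear functional dominated by \<open>p\<close>, represented by its graph, so that extensions
  are supersets and Zorn's lemma applies to set inclusion.\<close>
definition dominated_linear_graph :: "('a::real_vector \<Rightarrow> real) \<Rightarrow> ('a \<times> real) set \<Rightarrow> bool" where
  "dominated_linear_graph p G \<longleftrightarrow> (\<forall>x a b. (x, a) \<in> G \<longrightarrow> (x, b) \<in> G \<longrightarrow> a = b)
    \<and> (\<forall>x a y b. (x, a) \<in> G \<longrightarrow> (y, b) \<in> G \<longrightarrow> (x + y, a + b) \<in> G)
    \<and> (\<forall>x a c. (x, a) \<in> G \<longrightarrow> (c *\<^sub>R x, c * a) \<in> G)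
    \<and> (\<forall>x a. (x, a) \<in> G \<longrightarrow> a \<le> p x)"

lemma dominated_linear_graph_extension_bound:
  fixes p :: "'a::real_vector \<Rightarrow> real"
  assumes hom: "\<And>x c. c > 0 \<Longrightarrow> p (c *\<^sub>R x) = c * p x"
    and M: "dominated_linear_graph p M" and "(y, a) \<in> M"
    and lo: "\<And>v e. (v, e) \<in> M \<Longrightarrow> e - p (v - x1) \<le> \<xi>"
    and hi: "\<And>u b. (u, b) \<in> M \<Longrightarrow> \<xi> \<le> p (u + x1) - b"
  shows "a + c * \<xi> \<le> p (y + c *\<^sub>R x1)"
proof -
  have scale: "(r *\<^sub>R y, r * a) \<in> M" for r
    using M \<open>(y, a) \<in> M\<close> by (simp add: dominated_linear_graph_def)
  consider "c = 0" | "c > 0" | "c < 0" by linarith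
  then show ?thesis
  proof cases
    case 1
    then show ?thesis using M \<open>(y, a) \<in> M\<close> by (simp add: dominated_linear_graph_def)
  next
    case 2
    have "\<xi> \<le> p ((1/c) *\<^sub>R y + x1) - (1/c) * a" using hi[OF scale] .
    then have "c * \<xi> \<le> c * p ((1/c) *\<^sub>R y + x1) - a" using 2 by (simp add: field_simps)
    also have "c * p ((1/c) *\<^sub>R y + x1) = p (c *\<^sub>R ((1/c) *\<^sub>R y + x1))" using hom[OF 2] by simp
    also have "c *\<^sub>R ((1/c) *\<^sub>R y + x1) = y + c *\<^sub>R x1" using 2 by (simp add: algebra_simps)
    finally show ?thesis by simp
  next
    case 3
    define d where "d = - c"
    have d: "d > 0" using 3 by (simp add: d_def)
    have "(1/d) * a - p ((1/d) *\<^sub>R y - x1) \<le> \<xi>" using lo[OF scale] .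
    then have "a - d * p ((1/d) *\<^sub>R y - x1) \<le> d * \<xi>" using d by (simp add: field_simps)
    also have "d * p ((1/d) *\<^sub>R y - x1) = p (d *\<^sub>R ((1/d) *\<^sub>R y - x1))" using hom[OF d] by simp
    also have "d *\<^sub>R ((1/d) *\<^sub>R y - x1) = y + c *\<^sub>R x1" using d by (simp add: d_def algebra_simps)
    finally show ?thesis by (simp add: d_def)
  qed
qed

lemma dominated_linear_graph_extension:
  fixes p :: "'a::real_vector \<Rightarrow> real"
  assumes hom: "\<And>x c. c > 0 \<Longrightarrow> p (c *\<^sub>R x) = c * p x"
    and M: "dominated_linear_graph p M" and x1: "x1 \<notin> Domain M"
    and lo: "\<And>v e. (v, e) \<in> M \<Longrightarrow> e - p (v - x1) \<le> \<xi>"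
    and hi: "\<And>u b. (u, b) \<in> M \<Longrightarrow> \<xi> \<le> p (u + x1) - b"
  shows "dominated_linear_graph p {(y + c *\<^sub>R x1, a + c * \<xi>) | y a c. (y, a) \<in> M}"
    (is "dominated_linear_graph p ?M'")
proof -
  have functional: "\<And>x a b. (x, a) \<in> M \<Longrightarrow> (x, b) \<in> M \<Longrightarrow> a = b"
   and add: "\<And>x a y b. (x, a) \<in> M \<Longrightarrow> (y, b) \<in> M \<Longrightarrow> (x + y, a + b) \<in> M"
   and scale: "\<And>x a c. (x, a) \<in> M \<Longrightarrow> (c *\<^sub>R x, c * a) \<in> M"
    using M unfolding dominated_linear_graph_def by blast+
  have unique: "c = c' \<and> y = y'"
    if "(y, a) \<in> M" "(y', a') \<in> M" "y + c *\<^sub>R x1 = y' + c' *\<^sub>R x1" for y a c y' a' c'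
  proof (rule ccontr)
    assume "\<not> (c = c' \<and> y = y')"
    then have "c \<noteq> c'" using that(3) by auto
    have "(c - c') *\<^sub>R x1 = y' - y" using that(3) by (simp add: algebra_simps)
    moreover have "x1 = (1 / (c - c')) *\<^sub>R ((c - c') *\<^sub>R x1)" using \<open>c \<noteq> c'\<close> by simp
    ultimately have "x1 = (1 / (c - c')) *\<^sub>R (y' - y)" by simp
    moreover have "(y' - y, a' - a) \<in> M" using add[OF that(2) scale[OF that(1), of "-1"]] by simp
    ultimately have "(x1, (1 / (c - c')) * (a' - a)) \<in> M" using scale by metis
    then show False using x1 by blast
  qed
  show ?thesis
    unfolding dominated_linear_graph_def
  proof (intro conjI allI impI)
    fix x a b assume "(x, a) \<in> ?M'" "(x, b) \<in> ?M'"
    then obtain y1 a1 c1 y2 a2 c2 where h: "(y1, a1) \<in> M" "(y2, a2) \<in> M"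
      "x = y1 + c1 *\<^sub>R x1" "a = a1 + c1 * \<xi>" "x = y2 + c2 *\<^sub>R x1" "b = a2 + c2 * \<xi>"
      by blast
    then have "c1 = c2 \<and> y1 = y2" using unique by metis
    then show "a = b" using h functional by metis
  next
    fix x a y b assume "(x, a) \<in> ?M'" "(y, b) \<in> ?M'"
    then obtain y1 a1 c1 y2 a2 c2 where h: "(y1, a1) \<in> M" "(y2, a2) \<in> M"
      "x = y1 + c1 *\<^sub>R x1" "a = a1 + c1 * \<xi>" "y = y2 + c2 *\<^sub>R x1" "b = a2 + c2 * \<xi>"
      by blast
    have "x + y = (y1 + y2) + (c1 + c2) *\<^sub>R x1" "a + b = (a1 + a2) + (c1 + c2) * \<xi>"
      using h by (simp_all add: algebra_simps)
    then show "(x + y, a + b) \<in> ?M'" using add[OF h(1,2)] by blast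
  next
    fix x a c assume "(x, a) \<in> ?M'"
    then obtain y1 a1 c1 where h: "(y1, a1) \<in> M" "x = y1 + c1 *\<^sub>R x1" "a = a1 + c1 * \<xi>"
      by blast
    have "c *\<^sub>R x = c *\<^sub>R y1 + (c * c1) *\<^sub>R x1" "c * a = c * a1 + (c * c1) * \<xi>"
      using h by (simp_all add: algebra_simps)
    then show "(c *\<^sub>R x, c * a) \<in> ?M'" using scale[OF h(1)] by blast
  next
    fix x a assume "(x, a) \<in> ?M'"
    then obtain y a1 c where "(y, a1) \<in> M" "x = y + c *\<^sub>R x1" "a = a1 + c * \<xi>"
      by blast
    then show "a \<le> p x" using dominated_linear_graph_extension_bound[OF hom M _ lo hi] by simp
  qed
qed

lemma dominated_linear_graph_extend:
  fixes p :: "'a::real_vector \<Rightarrow> real"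
  assumes subadd: "\<And>x y. p (x + y) \<le> p x + p y"
    and hom: "\<And>x c. c > 0 \<Longrightarrow> p (c *\<^sub>R x) = c * p x"
    and M: "dominated_linear_graph p M" and zero: "(0, 0) \<in> M"
    and x1: "x1 \<notin> Domain M"
  shows "\<exists>M'. dominated_linear_graph p M' \<and> M \<subseteq> M' \<and> M' \<noteq> M"
proof -
  have add: "\<And>x a y b. (x, a) \<in> M \<Longrightarrow> (y, b) \<in> M \<Longrightarrow> (x + y, a + b) \<in> M"
   and bound: "\<And>x a. (x, a) \<in> M \<Longrightarrow> a \<le> p x"
    using M unfolding dominated_linear_graph_def by blast+
  text \<open>Any \<open>\<xi>\<close> between \<open>sup (e - p (v - x1))\<close> and \<open>inf (p (u + x1) - b)\<close> is an admissible
    value at \<open>x1\<close>; the gap is nonnegative by subadditivity.\<close>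
  have gap: "e - p (v - x1) \<le> p (u + x1) - b" if "(u, b) \<in> M" "(v, e) \<in> M" for u b v e
  proof -
    have "b + e \<le> p (u + v)" using bound[OF add[OF that]] .
    also have "\<dots> \<le> p (u + x1) + p (v - x1)"
      using subadd[of "u + x1" "v - x1"] by (simp add: algebra_simps)
    finally show ?thesis by simp
  qed
  define L where "L = (\<lambda>(v, e). e - p (v - x1)) ` M"
  define \<xi> where "\<xi> = Sup L"
  have "L \<noteq> {}" using zero by (auto simp: L_def)
  have "bdd_above L" unfolding bdd_above_def L_def using gap[OF zero] by force
  have lo: "e - p (v - x1) \<le> \<xi>" if "(v, e) \<in> M" for v e
    unfolding \<xi>_def by (rule cSup_upper[OF _ \<open>bdd_above L\<close>]) (use that in \<open>force simp: L_def\<close>)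
  have hi: "\<xi> \<le> p (u + x1) - b" if "(u, b) \<in> M" for u b
    unfolding \<xi>_def by (rule cSup_least[OF \<open>L \<noteq> {}\<close>]) (use gap[OF that] in \<open>auto simp: L_def\<close>)
  define M' where "M' = {(y + c *\<^sub>R x1, a + c * \<xi>) | y a c. (y, a) \<in> M}"
  have "dominated_linear_graph p M'"
    unfolding M'_def by (rule dominated_linear_graph_extension[OF hom M x1 lo hi])
  moreover have "M \<subseteq> M'" unfolding M'_def by force
  moreover have "(0 + 1 *\<^sub>R x1, 0 + 1 * \<xi>) \<in> M'" unfolding M'_def using zero by blast
  moreover have "(x1, \<xi>) \<notin> M" using x1 by blast
  ultimately show ?thesis by auto
qed

lemma dominated_linear_graph_Union_chain:
  assumes "C \<in> chains {G. dominated_linear_graph p G}"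
  shows "dominated_linear_graph p (\<Union>C)"
proof -
  have graphs: "\<And>X. X \<in> C \<Longrightarrow> dominated_linear_graph p X"
    using assms by (auto simp: chains_def)
  have chain: "\<And>X Y. X \<in> C \<Longrightarrow> Y \<in> C \<Longrightarrow> X \<subseteq> Y \<or> Y \<subseteq> X"
    using assms by (auto simp: chains_def chain_subset_def)
  have common: "\<exists>Z\<in>C. (x, a) \<in> Z \<and> (y, b) \<in> Z" if "(x, a) \<in> \<Union>C" "(y, b) \<in> \<Union>C" for x a y b
    using that chain by blast
  show ?thesis
    unfolding dominated_linear_graph_def
  proof (intro conjI allI impI)
    fix x a b assume "(x, a) \<in> \<Union>C" "(x, b) \<in> \<Union>C"
    then obtain Z where "Z \<in> C" "(x, a) \<in> Z" "(x, b) \<in> Z" using common by blast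
    then show "a = b" using graphs unfolding dominated_linear_graph_def by blast
  next
    fix x a y b assume "(x, a) \<in> \<Union>C" "(y, b) \<in> \<Union>C"
    then obtain Z where "Z \<in> C" "(x, a) \<in> Z" "(y, b) \<in> Z" using common by blast
    then show "(x + y, a + b) \<in> \<Union>C" using graphs unfolding dominated_linear_graph_def by blast
  next
    fix x a c assume "(x, a) \<in> \<Union>C"
    then show "(c *\<^sub>R x, c * a) \<in> \<Union>C" using graphs unfolding dominated_linear_graph_def by blast
  next
    fix x a assume "(x, a) \<in> \<Union>C"
    then show "a \<le> p x" using graphs unfolding dominated_linear_graph_def by blast
  qed
qed

lemma dominated_linear_graph_line:
  fixes p :: "'a::real_vector \<Rightarrow> real"
  assumes hom: "\<And>x c. c > 0 \<Longrightarrow> p (c *\<^sub>R x) = c * p x"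
    and nonneg: "\<And>x. 0 \<le> p x" and "u \<noteq> 0" and "1 \<le> p u"
  shows "dominated_linear_graph p (range (\<lambda>t. (t *\<^sub>R u, t)))"
  unfolding dominated_linear_graph_def
proof (intro conjI allI impI)
  fix x a assume "(x, a) \<in> range (\<lambda>t. (t *\<^sub>R u, t))"
  then obtain t where x: "x = t *\<^sub>R u" "a = t" by auto
  show "a \<le> p x"
  proof (cases "t > 0")
    case True
    then show ?thesis using x hom[OF True, of u] \<open>1 \<le> p u\<close> by (simp add: mult_le_cancel_left1)
  next
    case False
    then show ?thesis using x nonneg[of x] by simp
  qed
next
  fix x a b assume "(x, a) \<in> range (\<lambda>t. (t *\<^sub>R u, t))" "(x, b) \<in> range (\<lambda>t. (t *\<^sub>R u, t))"
  then show "a = b" using \<open>u \<noteq> 0\<close> by (auto simp: scaleR_cancel_right)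
next
  fix x a y b assume "(x, a) \<in> range (\<lambda>t. (t *\<^sub>R u, t))" "(y, b) \<in> range (\<lambda>t. (t *\<^sub>R u, t))"
  then show "(x + y, a + b) \<in> range (\<lambda>t. (t *\<^sub>R u, t))"
    by (auto simp: scaleR_add_left intro!: image_eqI[where x="a + b"])
next
  fix x a c assume "(x, a) \<in> range (\<lambda>t. (t *\<^sub>R u, t))"
  then show "(c *\<^sub>R x, c * a) \<in> range (\<lambda>t. (t *\<^sub>R u, t))"
    by (auto intro!: image_eqI[where x="c * a"])
qed

lemma sublinear_dominated_linear_exists:
  fixes p :: "'a::real_vector \<Rightarrow> real"
  assumes subadd: "\<And>x y. p (x + y) \<le> p x + p y"
    and hom: "\<And>x c. c > 0 \<Longrightarrow> p (c *\<^sub>R x) = c * p x"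
    and nonneg: "\<And>x. 0 \<le> p x" and "u \<noteq> 0" and "1 \<le> p u"
  shows "\<exists>g. linear g \<and> (\<forall>x. g x \<le> p x) \<and> g u = 1"
proof -
  define G0 where "G0 = range (\<lambda>t. (t *\<^sub>R u, t))"
  define A where "A = {G. dominated_linear_graph p G \<and> G0 \<subseteq> G}"
  have "\<forall>C\<in>chains A. \<exists>U\<in>A. \<forall>X\<in>C. X \<subseteq> U"
  proof
    fix C assume C: "C \<in> chains A"
    show "\<exists>U\<in>A. \<forall>X\<in>C. X \<subseteq> U"
    proof (cases "C = {}")
      case True
      then show ?thesis
        using dominated_linear_graph_line[OF hom nonneg assms(4,5)] by (auto simp: A_def G0_def)
    next
      case False
      have "C \<in> chains {G. dominated_linear_graph p G}"
        using C by (auto simp: chains_def A_def)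
      then have "dominated_linear_graph p (\<Union>C)" by (rule dominated_linear_graph_Union_chain)
      moreover have "G0 \<subseteq> \<Union>C" using False C by (auto simp: chains_def A_def)
      ultimately show ?thesis unfolding A_def by blast
    qed
  qed
  from Zorn_Lemma2[OF this] obtain M where "M \<in> A" and max: "\<And>X. X \<in> A \<Longrightarrow> M \<subseteq> X \<Longrightarrow> X = M"
    by blast
  then have M: "dominated_linear_graph p M" and "G0 \<subseteq> M" by (auto simp: A_def)
  have zero: "(0, 0) \<in> M" and unit: "(u, 1) \<in> M"
    using \<open>G0 \<subseteq> M\<close> unfolding G0_def by (force, force)
  have total: "x \<in> Domain M" for x
  proof (rule ccontr)
    assume "x \<notin> Domain M"
    from dominated_linear_graph_extend[OF subadd hom M zero this] \<open>G0 \<subseteq> M\<close> max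
    show False by (auto simp: A_def)
  qed
  have functional: "\<And>x a b. (x, a) \<in> M \<Longrightarrow> (x, b) \<in> M \<Longrightarrow> a = b"
   and add: "\<And>x a y b. (x, a) \<in> M \<Longrightarrow> (y, b) \<in> M \<Longrightarrow> (x + y, a + b) \<in> M"
   and scale: "\<And>x a c. (x, a) \<in> M \<Longrightarrow> (c *\<^sub>R x, c * a) \<in> M"
   and bound: "\<And>x a. (x, a) \<in> M \<Longrightarrow> a \<le> p x"
    using M unfolding dominated_linear_graph_def by blast+
  define g where "g x = (THE a. (x, a) \<in> M)" for x
  have graph: "(x, g x) \<in> M" for x
  proof -
    obtain a where "(x, a) \<in> M" using total[of x] by blast
    then have "\<exists>!a. (x, a) \<in> M" using functional by blast
    then show ?thesis unfolding g_def by (rule theI')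
  qed
  have g_eq: "(x, a) \<in> M \<Longrightarrow> g x = a" for x a using functional graph by blast
  have "linear g"
    by (rule linearI) (use g_eq[OF add[OF graph graph]] g_eq[OF scale[OF graph]] in simp_all)
  then show ?thesis using bound graph g_eq[OF unit] by blast
qed

section \<open>Strict separation from a closed convex set\<close>

definition minkowski_functional :: "'z::real_vector set \<Rightarrow> 'z \<Rightarrow> real" where
  "minkowski_functional Q y = Inf {l. 0 < l \<and> (1 / l) *\<^sub>R y \<in> Q}"

locale convex_zero_nbhd =
  fixes T :: "'z::real_vector topology" and Q :: "'z set"
  assumes lc_tvs: "lc_tvs T" and openin: "openin T Q" and convex: "convex Q" and zero: "0 \<in> Q"
begin

abbreviation scales :: "'z \<Rightarrow> real set" where
  "scales y \<equiv> {l. 0 < l \<and> (1 / l) *\<^sub>R y \<in> Q}"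

lemma scales_nonempty: "scales y \<noteq> {}"
proof -
  obtain d where "d > 0" "\<And>t. \<bar>t\<bar> < d \<Longrightarrow> t *\<^sub>R y + 0 \<in> Q"
    using lc_tvs_absorbing[OF lc_tvs openin zero] by blast
  then have "2 / d \<in> scales y" by simp
  then show ?thesis by blast
qed

lemma scales_upward_closed:
  assumes "l \<in> scales y" "l \<le> l'"
  shows "l' \<in> scales y"
proof -
  have "0 < l" "0 < l'" using assms by auto
  have "(l / l') *\<^sub>R ((1 / l) *\<^sub>R y) + (1 - l / l') *\<^sub>R 0 \<in> Q"
    using convexD[OF convex, of "(1 / l) *\<^sub>R y" 0 "l / l'" "1 - l / l'"] assms \<open>0 < l'\<close> zero
    by (simp add: divide_le_eq_1)
  then show ?thesis using \<open>0 < l\<close> \<open>0 < l'\<close> by simp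
qed

lemma minkowski_functional_le: "l \<in> scales y \<Longrightarrow> minkowski_functional Q y \<le> l"
  unfolding minkowski_functional_def by (rule cInf_lower) (auto intro: bdd_belowI[of _ 0])

lemma minkowski_functional_nonneg: "0 \<le> minkowski_functional Q y"
  unfolding minkowski_functional_def by (rule cInf_greatest[OF scales_nonempty]) simp

lemma less_minkowski_functional_scales: "minkowski_functional Q y < c \<Longrightarrow> c \<in> scales y"
  unfolding minkowski_functional_def
  using cInf_lessD[OF scales_nonempty] scales_upward_closed by (meson less_imp_le)

lemma minkowski_functional_subadditive:
  "minkowski_functional Q (x + y) \<le> minkowski_functional Q x + minkowski_functional Q y"
proof (rule field_le_epsilon)
  fix e :: real assume "0 < e"
  define a where "a = minkowski_functional Q x + e / 2"
  define b where "b = minkowski_functional Q y + e / 2"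
  have "a \<in> scales x" using less_minkowski_functional_scales[of x a] \<open>0 < e\<close> by (simp add: a_def)
  have "b \<in> scales y" using less_minkowski_functional_scales[of y b] \<open>0 < e\<close> by (simp add: b_def)
  then have "0 < a" "0 < b" using \<open>a \<in> scales x\<close> by auto
  have "(a / (a + b)) *\<^sub>R ((1 / a) *\<^sub>R x) + (b / (a + b)) *\<^sub>R ((1 / b) *\<^sub>R y) \<in> Q"
    using convexD[OF convex, of "(1 / a) *\<^sub>R x" "(1 / b) *\<^sub>R y" "a / (a + b)" "b / (a + b)"]
      \<open>a \<in> scales x\<close> \<open>b \<in> scales y\<close> \<open>0 < a\<close> \<open>0 < b\<close>
    by (simp add: add_divide_distrib[symmetric])
  also have "(a / (a + b)) *\<^sub>R ((1 / a) *\<^sub>R x) + (b / (a + b)) *\<^sub>R ((1 / b) *\<^sub>R y)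
      = (1 / (a + b)) *\<^sub>R (x + y)"
    using \<open>0 < a\<close> \<open>0 < b\<close> by (simp add: scaleR_add_right)
  finally have "minkowski_functional Q (x + y) \<le> a + b"
    using \<open>0 < a\<close> \<open>0 < b\<close> by (intro minkowski_functional_le) simp
  then show "minkowski_functional Q (x + y)
      \<le> minkowski_functional Q x + minkowski_functional Q y + e"
    by (simp add: a_def b_def)
qed

lemma minkowski_functional_scale_le:
  assumes "0 < c"
  shows "minkowski_functional Q (c *\<^sub>R y) \<le> c * minkowski_functional Q y"
proof -
  have "minkowski_functional Q (c *\<^sub>R y) / c \<le> l" if "l \<in> scales y" for l
  proof -
    have "minkowski_functional Q (c *\<^sub>R y) \<le> c * l"
      using that assms by (intro minkowski_functional_le) simp
    then show ?thesis using assms by (simp add: divide_le_eq mult.commute)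
  qed
  then have "minkowski_functional Q (c *\<^sub>R y) / c \<le> minkowski_functional Q y"
    unfolding minkowski_functional_def[of Q y] by (intro cInf_greatest[OF scales_nonempty]) blast
  then show ?thesis using assms by (simp add: divide_le_eq mult.commute)
qed

lemma minkowski_functional_scale:
  assumes "0 < c"
  shows "minkowski_functional Q (c *\<^sub>R y) = c * minkowski_functional Q y"
proof -
  have "minkowski_functional Q y \<le> (1 / c) * minkowski_functional Q (c *\<^sub>R y)"
    using minkowski_functional_scale_le[of "1 / c" "c *\<^sub>R y"] assms by simp
  then show ?thesis
    using minkowski_functional_scale_le[OF assms, of y] assms by (simp add: field_simps)
qed

lemma minkowski_functional_less_1:
  assumes "y \<in> Q"
  shows "minkowski_functional Q y < 1"
proof -
  obtain d where "d > 0" "\<And>t. \<bar>t\<bar> < d \<Longrightarrow> t *\<^sub>R y + y \<in> Q"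
    using lc_tvs_absorbing[OF lc_tvs openin assms] by blast
  then have "(1 + d / 2) *\<^sub>R y \<in> Q" by (simp add: algebra_simps)
  then have "minkowski_functional Q y \<le> 1 / (1 + d / 2)"
    using \<open>d > 0\<close> by (intro minkowski_functional_le) simp
  also have "\<dots> < 1" using \<open>d > 0\<close> by simp
  finally show ?thesis .
qed

lemma minkowski_functional_ge_1: "y \<notin> Q \<Longrightarrow> 1 \<le> minkowski_functional Q y"
  using less_minkowski_functional_scales[of y 1] by force

lemma continuous_map_linear_dominated:
  assumes "linear g" and dominated: "\<And>y. g y \<le> minkowski_functional Q y"
  shows "continuous_map T euclideanreal g"
proof -
  define N where "N = Q \<inter> {y. (-1) *\<^sub>R y + 0 \<in> Q}"
  have "openin T N" unfolding N_def using openin lc_tvs_openin_affine_vimage[OF lc_tvs openin] by blast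
  have "0 \<in> N" using zero by (simp add: N_def)
  text \<open>\<open>g\<close> is bounded by \<open>1\<close> on the symmetric neighbourhood \<open>N\<close> of \<open>0\<close>, hence continuous.\<close>
  have bounded: "\<bar>g y\<bar> < 1" if "y \<in> N" for y
    using dominated[of y] dominated[of "-y"] minkowski_functional_less_1[of y]
      minkowski_functional_less_1[of "-y"] that linear_neg[OF \<open>linear g\<close>, of y]
    by (simp add: N_def)
  have "openin T {x \<in> topspace T. g x \<in> U}" if "open U" for U
  proof (subst openin_subopen, intro ballI)
    fix y0 assume "y0 \<in> {x \<in> topspace T. g x \<in> U}"
    then obtain e where "e > 0" "ball (g y0) e \<subseteq> U" using \<open>open U\<close> open_contains_ball by force
    define V where "V = {y. (1 / e) *\<^sub>R y + (- ((1 / e) *\<^sub>R y0)) \<in> N}"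
    have "openin T V" unfolding V_def by (rule lc_tvs_openin_affine_vimage[OF lc_tvs \<open>openin T N\<close>])
    moreover have "y0 \<in> V" using \<open>0 \<in> N\<close> by (simp add: V_def)
    moreover have "g y \<in> U" if "y \<in> V" for y
    proof -
      have "(1 / e) *\<^sub>R y + (- ((1 / e) *\<^sub>R y0)) = (1 / e) *\<^sub>R (y - y0)"
        by (simp add: algebra_simps)
      then have "g ((1 / e) *\<^sub>R y + (- ((1 / e) *\<^sub>R y0))) = (g y - g y0) / e"
        using \<open>linear g\<close> by (simp add: linear_scale linear_diff diff_divide_distrib)
      then have "\<bar>g y - g y0\<bar> / e < 1"
        using bounded that \<open>e > 0\<close> unfolding V_def by (metis abs_divide abs_of_pos mem_Collect_eq)
      then show ?thesis using \<open>e > 0\<close> \<open>ball (g y0) e \<subseteq> U\<close> by (auto simp: dist_real_def)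
    qed
    ultimately show "\<exists>V. openin T V \<and> y0 \<in> V \<and> V \<subseteq> {x \<in> topspace T. g x \<in> U}"
      using lc_tvs_topspace[OF lc_tvs] by blast
  qed
  then show ?thesis unfolding continuous_map_def by simp
qed

end

lemma lc_tvs_separation_closed_convex:
  assumes lc: "lc_tvs T" and "closedin T K" "convex K" "k0 \<in> K" "z \<notin> K"
  shows "\<exists>g\<in>topdual T. \<exists>\<delta>>0. \<forall>k\<in>K. g k \<le> g z - \<delta>"
proof -
  have "openin T (UNIV - K)" using \<open>closedin T K\<close> lc_tvs_topspace[OF lc] by (metis closedin_def)
  then have "openin T {w. 1 *\<^sub>R w + z \<in> UNIV - K}" by (rule lc_tvs_openin_affine_vimage[OF lc])
  moreover have "0 \<in> {w. 1 *\<^sub>R w + z \<in> UNIV - K}" using \<open>z \<notin> K\<close> by simp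
  ultimately obtain W where W: "openin T W" "convex W" "0 \<in> W"
    and "W \<subseteq> {w. 1 *\<^sub>R w + z \<in> UNIV - K}"
    using lc unfolding lc_tvs_def by blast
  then have WK: "\<And>w. w \<in> W \<Longrightarrow> z + w \<notin> K" by (auto simp: add.commute)
  text \<open>\<open>Q = (K - k\<^sub>0) - W\<close> is an open convex neighbourhood of \<open>0\<close> not containing \<open>z - k\<^sub>0\<close>; its
    gauge dominates a functional \<open>g\<close> with \<open>g (z - k\<^sub>0) = 1\<close>.\<close>
  define Q where "Q = (\<Union>v\<in>(\<lambda>k. k - k0) ` K. \<Union>w\<in>W. {v - w})"
  interpret convex_zero_nbhd T Q
  proof
    show "openin T Q" unfolding Q_def by (rule lc_tvs_openin_differences[OF lc W(1)])
    show "convex Q" unfolding Q_def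
      by (intro convex_differences convex_translation_subtract \<open>convex K\<close> W(2))
    show "0 \<in> Q" unfolding Q_def using \<open>k0 \<in> K\<close> W(3) by force
  qed (rule lc)
  have "z - k0 \<notin> Q"
  proof
    assume "z - k0 \<in> Q"
    then obtain k w where "k \<in> K" "w \<in> W" "z - k0 = k - k0 - w" unfolding Q_def by blast
    then show False using WK[of w] by (simp add: algebra_simps)
  qed
  moreover have "z - k0 \<noteq> 0" using \<open>z \<notin> K\<close> \<open>k0 \<in> K\<close> by auto
  ultimately obtain g where g: "linear g" "\<And>x. g x \<le> minkowski_functional Q x" "g (z - k0) = 1"
    using sublinear_dominated_linear_exists[of "minkowski_functional Q" "z - k0"]
      minkowski_functional_subadditive minkowski_functional_scale minkowski_functional_nonneg
      minkowski_functional_ge_1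
    by blast
  have "g \<in> topdual T" using g continuous_map_linear_dominated by (simp add: topdual_def)
  obtain d where "d > 0" "\<And>t. \<bar>t\<bar> < d \<Longrightarrow> t *\<^sub>R (k0 - z) + 0 \<in> W"
    using lc_tvs_absorbing[OF lc W(1) W(3)] by blast
  define w0 where "w0 = (d / 2) *\<^sub>R (k0 - z)"
  have "w0 \<in> W" using \<open>d > 0\<close> \<open>\<And>t. \<bar>t\<bar> < d \<Longrightarrow> _\<close> by (simp add: w0_def)
  have "g w0 = - (d / 2)" using g(1,3) by (simp add: w0_def linear_scale linear_diff algebra_simps)
  have "g k \<le> g z - d / 2" if "k \<in> K" for k
  proof -
    have "k - k0 - w0 \<in> Q" unfolding Q_def using that \<open>w0 \<in> W\<close> by blast
    then have "g (k - k0 - w0) < 1" using g(2) minkowski_functional_less_1 by (meson le_less_trans)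
    then show ?thesis using g(1,3) \<open>g w0 = - (d / 2)\<close> by (simp add: linear_diff)
  qed
  then show ?thesis using \<open>g \<in> topdual T\<close> \<open>d > 0\<close> by (intro bexI[of _ g] exI[of _ "d / 2"]) auto
qed

section \<open>Convex set-valued maps\<close>

lemma set_convex_fun_combination:
  assumes "lc_tvs T" "set_convex_fun T f" "0 < t" "t < 1" "a \<in> f x1" "b \<in> f x2"
  shows "t *\<^sub>R a + (1 - t) *\<^sub>R b \<in> f (t *\<^sub>R x1 + (1 - t) *\<^sub>R x2)"
proof -
  have "t *\<^sub>R a + (1 - t) *\<^sub>R b
      \<in> {a + b | a b. a \<in> set_scale t (f x1) \<and> b \<in> set_scale (1 - t) (f x2)}"
    using assms(5,6) unfolding set_scale_def by blast
  also have "\<dots> \<subseteq> oplus_cl T (set_scale t (f x1)) (set_scale (1 - t) (f x2))"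
    unfolding oplus_cl_def by (rule closure_of_subset) (simp add: lc_tvs_topspace[OF assms(1)])
  also have "\<dots> \<subseteq> f (t *\<^sub>R x1 + (1 - t) *\<^sub>R x2)"
    using assms(2-4) unfolding set_convex_fun_def by blast
  finally show ?thesis .
qed

lemma set_convex_fun_convex_values:
  assumes "lc_tvs T" "set_convex_fun T f"
  shows "convex (f x)"
  unfolding convex_alt
proof (intro ballI allI impI)
  fix a b and u :: real assume "a \<in> f x" "b \<in> f x" "0 \<le> u \<and> u \<le> 1"
  then consider "u = 0" | "u = 1" | "0 < u" "u < 1" by linarith
  then show "(1 - u) *\<^sub>R a + u *\<^sub>R b \<in> f x"
  proof cases
    case 3
    then have "u *\<^sub>R b + (1 - u) *\<^sub>R a \<in> f (u *\<^sub>R x + (1 - u) *\<^sub>R x)"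
      using set_convex_fun_combination[OF assms] \<open>a \<in> f x\<close> \<open>b \<in> f x\<close> by blast
    then show ?thesis by (simp add: algebra_simps flip: scaleR_add_left)
  qed (use \<open>a \<in> f x\<close> \<open>b \<in> f x\<close> in auto)
qed

lemma Gspace_closedin:
  assumes "A \<in> Gspace T C"
  shows "closedin T A"
proof -
  have "A = T closure_of (convex hull {a + c | a c. a \<in> A \<and> c \<in> C})"
    using assms unfolding Gspace_def mem_Collect_eq .
  then show ?thesis by (rule ssubst) (rule closedin_closure_of)
qed

lemma Gspace_add_cone:
  assumes "lc_tvs T" "A \<in> Gspace T C" "a \<in> A" "c \<in> C"
  shows "a + c \<in> A"
proof -
  have "a + c \<in> convex hull {a + c | a c. a \<in> A \<and> c \<in> C}"
    using assms(3,4) by (intro hull_inc) blast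
  also have "\<dots> \<subseteq> T closure_of (convex hull {a + c | a c. a \<in> A \<and> c \<in> C})"
    by (rule closure_of_subset) (simp add: lc_tvs_topspace[OF assms(1)])
  also have "\<dots> = A" using assms(2) unfolding Gspace_def mem_Collect_eq by (rule sym)
  finally show ?thesis .
qed

definition open_segment_hull ::
    "'z::real_vector topology \<Rightarrow> ('x::real_vector \<Rightarrow> 'z set) \<Rightarrow> 'x \<Rightarrow> 'x \<Rightarrow> 'z set" where
  "open_segment_hull T f x0 x =
     T closure_of (convex hull (\<Union>t\<in>{0<..<1}. f (x0 + t *\<^sub>R (x - x0))))"

lemma mem_open_segment_hull:
  assumes "lc_tvs T" "0 < t" "t < 1" "w \<in> f (x0 + t *\<^sub>R (x - x0))"
  shows "w \<in> open_segment_hull T f x0 x"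
proof -
  have "w \<in> convex hull (\<Union>t\<in>{0<..<1}. f (x0 + t *\<^sub>R (x - x0)))"
    using assms(2-4) by (intro hull_inc UN_I[of t]) auto
  then show ?thesis unfolding open_segment_hull_def
    by (rule rev_subsetD[OF _ closure_of_subset]) (simp add: lc_tvs_topspace[OF assms(1)])
qed

lemma open_segment_hull_subset_closed_convex:
  assumes "closedin T H" "convex H" "\<And>t. 0 < t \<Longrightarrow> t < 1 \<Longrightarrow> f (x0 + t *\<^sub>R (x - x0)) \<subseteq> H"
  shows "open_segment_hull T f x0 x \<subseteq> H"
  unfolding open_segment_hull_def
  using assms by (intro closure_of_minimal hull_minimal UN_least) auto

lemma subset_open_segment_hull:
  assumes lc: "lc_tvs T" and "set_convex_fun T f" and "z0 \<in> f x0"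
  shows "f x \<subseteq> open_segment_hull T f x0 x"
proof
  fix z assume "z \<in> f x"
  have "\<exists>y. y \<in> convex hull (\<Union>t\<in>{0<..<1}. f (x0 + t *\<^sub>R (x - x0))) \<and> y \<in> U"
    if U: "z \<in> U" "openin T U" for U
  proof -
    obtain d where "d > 0" and near: "\<forall>s. \<bar>s\<bar> < d \<longrightarrow> s *\<^sub>R (z0 - z) + z \<in> U"
      using lc_tvs_absorbing[OF lc U(2,1)] by blast
    define s where "s = min (1 / 2) (d / 2)"
    have s: "0 < s" "s < 1" "\<bar>s\<bar> < d" using \<open>d > 0\<close> by (auto simp: s_def)
    have "(1 - s) *\<^sub>R z + (1 - (1 - s)) *\<^sub>R z0 \<in> f ((1 - s) *\<^sub>R x + (1 - (1 - s)) *\<^sub>R x0)"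
      using set_convex_fun_combination[OF lc assms(2), of "1 - s" z x z0 x0] s \<open>z \<in> f x\<close> assms(3)
      by simp
    then have "s *\<^sub>R (z0 - z) + z \<in> f (x0 + (1 - s) *\<^sub>R (x - x0))"
      by (simp add: algebra_simps)
    then have "s *\<^sub>R (z0 - z) + z \<in> convex hull (\<Union>t\<in>{0<..<1}. f (x0 + t *\<^sub>R (x - x0)))"
      using s by (intro hull_inc UN_I[of "1 - s"]) auto
    then show ?thesis using near s(3) by blast
  qed
  then show "z \<in> open_segment_hull T f x0 x"
    unfolding open_segment_hull_def in_closure_of by (simp add: lc_tvs_topspace[OF lc])
qed

section \<open>Scalarization\<close>

lemma scal_phi_le: "w \<in> f x \<Longrightarrow> scal_phi f g x \<le> ereal (- g w)"
  unfolding scal_phi_def by (rule INF_lower)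

lemma scal_phi_lessE:
  assumes "scal_phi f g x < c"
  obtains w where "w \<in> f x" "ereal (- g w) < c"
  using assms unfolding scal_phi_def by (auto simp: INF_less_iff)

lemma scal_phi_empty: "f x = {} \<Longrightarrow> scal_phi f g x = \<infinity>"
  unfolding scal_phi_def by (simp add: top_ereal_def)

lemma scal_phi_real:
  assumes "w \<in> f x" "scal_phi f g x \<noteq> -\<infinity>"
  obtains a where "scal_phi f g x = ereal a"
  using scal_phi_le[of w f x g, OF assms(1)] assms(2) by (cases "scal_phi f g x") auto

lemma inf_minus_infinity: "inf_minus r \<infinity> = -\<infinity>"
proof -
  have "inf_minus r \<infinity> \<le> ereal t" for t
    unfolding inf_minus_def by (rule Inf_lower) (auto simp: inf_plus_def)
  then show ?thesis by (rule ereal_bot)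
qed

lemma inf_minus_neg_iff: "inf_minus r (ereal a) < 0 \<longleftrightarrow> r < ereal a"
proof
  assume "inf_minus r (ereal a) < 0"
  then obtain t where "r \<le> ereal (a + t)" "t < 0"
    unfolding inf_minus_def Inf_less_iff by (auto simp: inf_plus_def)
  moreover from \<open>t < 0\<close> have "ereal (a + t) < ereal a" by simp
  ultimately show "r < ereal a" by (meson le_less_trans)
next
  assume "r < ereal a"
  obtain t where "t < 0" "r \<le> ereal (a + t)"
  proof (cases r)
    case (real b)
    then show ?thesis using \<open>r < ereal a\<close> that[of "b - a"] by simp
  qed (use \<open>r < ereal a\<close> that[of "-1"] in auto)
  then have "inf_minus r (ereal a) \<le> ereal t"
    unfolding inf_minus_def by (intro Inf_lower) (auto simp: inf_plus_def)
  then show "inf_minus r (ereal a) < 0" using \<open>t < 0\<close> by (simp add: order_le_less_trans)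
qed

lemma scal_phi_dir_neg_iff:
  "scal_phi_dir f g x u < 0
     \<longleftrightarrow> (\<exists>s>0. inf_minus (scal_phi f g (x + s *\<^sub>R u)) (scal_phi f g x) < 0)"
proof -
  have pos_mult_neg: "ereal (1 / s) * r < 0 \<longleftrightarrow> r < 0" if "s > 0" for s r
    using that by (cases r) (auto simp: divide_less_0_iff)
  show ?thesis
    unfolding scal_phi_dir_def INF_less_iff using pos_mult_neg by auto
qed

lemma scal_phi_dir_neg_iff_real:
  assumes "scal_phi f g x = ereal a"
  shows "scal_phi_dir f g x u < 0 \<longleftrightarrow> (\<exists>s>0. scal_phi f g (x + s *\<^sub>R u) < ereal a)"
  unfolding scal_phi_dir_neg_iff assms inf_minus_neg_iff ..

lemma scal_phi_dir_neg_empty: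
  assumes "f x = {}"
  shows "scal_phi_dir f g x u < 0"
  unfolding scal_phi_dir_neg_iff scal_phi_empty[of f x g, OF assms] inf_minus_infinity
  by (auto intro: exI[of _ 1])

section \<open>The scalarized Minty inequality\<close>

lemma scal_phi_descent_convex_combination:
  assumes lc: "lc_tvs T" and conv: "set_convex_fun T f" and "linear g"
    and phi: "scal_phi f g x = ereal a" and descent: "scal_phi f g (x + s *\<^sub>R u) < ereal a"
    and "0 < l" "l < 1"
  shows "\<exists>w\<in>f (x + (l * s) *\<^sub>R u). - g w < a"
proof -
  obtain w where w: "w \<in> f (x + s *\<^sub>R u)" "- g w < a"
    using descent by (auto elim: scal_phi_lessE)
  define d where "d = a + g w"
  have "d > 0" using w(2) by (simp add: d_def)
  text \<open>Combine \<open>w\<close> with a point of \<open>f x\<close> whose value exceeds \<open>a\<close> by less than \<open>l d / 2\<close>.\<close>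
  define e where "e = l * d / 2"
  have "e > 0" using \<open>0 < l\<close> \<open>d > 0\<close> by (simp add: e_def)
  then have "scal_phi f g x < ereal (a + e)" using phi by simp
  then obtain w1 where w1: "w1 \<in> f x" "- g w1 < a + e" by (auto elim: scal_phi_lessE)
  define w' where "w' = l *\<^sub>R w + (1 - l) *\<^sub>R w1"
  have "w' \<in> f (l *\<^sub>R (x + s *\<^sub>R u) + (1 - l) *\<^sub>R x)"
    unfolding w'_def using set_convex_fun_combination[OF lc conv \<open>0 < l\<close> \<open>l < 1\<close> w(1) w1(1)] .
  moreover have "l *\<^sub>R (x + s *\<^sub>R u) + (1 - l) *\<^sub>R x = x + (l * s) *\<^sub>R u"
    by (simp add: algebra_simps)
  moreover have "- g w' < a"
  proof -
    have "g w' = l * g w + (1 - l) * g w1"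
      using \<open>linear g\<close> by (simp add: w'_def linear_add linear_scale)
    then have "- g w' = l * (a - d) + (1 - l) * (- g w1)" by (simp add: d_def algebra_simps)
    also have "\<dots> \<le> l * (a - d) + (1 - l) * (a + e)"
      using w1(2) \<open>l < 1\<close> by (intro add_left_mono mult_left_mono) auto
    also have "\<dots> < a"
      using mult_pos_pos[OF \<open>d > 0\<close> \<open>0 < l\<close>] mult_pos_pos[OF \<open>d > 0\<close> mult_pos_pos[OF \<open>0 < l\<close> \<open>0 < l\<close>]]
      by (simp add: e_def algebra_simps)
    finally show ?thesis .
  qed
  ultimately show ?thesis by auto
qed

lemma scalar_minty_imp_open_segment_hull_ne:
  assumes lc: "lc_tvs T" and conv: "set_convex_fun T f" and "linear g" and "x \<in> sdom f"
    and finite: "scal_phi f g x \<noteq> -\<infinity>" and descent: "scal_phi_dir f g x (x0 - x) < 0"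
  shows "open_segment_hull T f x0 x \<noteq> f x"
proof -
  obtain a where a: "scal_phi f g x = ereal a"
    using \<open>x \<in> sdom f\<close> finite by (auto simp: sdom_def elim: scal_phi_real)
  then obtain s where "s > 0" "scal_phi f g (x + s *\<^sub>R (x0 - x)) < ereal a"
    using descent scal_phi_dir_neg_iff_real by blast
  define l where "l = 1 / (1 + s)"
  have "0 < l" "l < 1" using \<open>s > 0\<close> by (auto simp: l_def)
  then obtain w where w: "w \<in> f (x + (l * s) *\<^sub>R (x0 - x))" "- g w < a"
    using scal_phi_descent_convex_combination[OF lc conv \<open>linear g\<close> a] \<open>scal_phi f g _ < _\<close> by blast
  have "x + (l * s) *\<^sub>R (x0 - x) = x0 + l *\<^sub>R (x - x0)"
  proof -
    have "l * s = 1 - l" using \<open>s > 0\<close> by (simp add: l_def field_simps)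
    then have "x + (l * s) *\<^sub>R (x0 - x) = x + (1 - l) *\<^sub>R (x0 - x)" by simp
    then show ?thesis by (simp add: algebra_simps)
  qed
  then have "w \<in> open_segment_hull T f x0 x"
    using w(1) mem_open_segment_hull[OF lc \<open>0 < l\<close> \<open>l < 1\<close>] by simp
  moreover have "w \<notin> f x" using scal_phi_le[of w f x g] a w(2) by auto
  ultimately show ?thesis by blast
qed

definition minty_descent ::
    "'z::real_vector topology \<Rightarrow> 'z set \<Rightarrow> ('x::real_vector \<Rightarrow> 'z set) \<Rightarrow> 'x \<Rightarrow> 'x \<Rightarrow> bool" where
  "minty_descent T C f x0 x \<longleftrightarrow> (\<exists>g \<in> neg_dual_cone T C - {\<lambda>_. 0}.
     scal_phi f g x \<noteq> -\<infinity> \<and> scal_phi_dir f g x (x0 - x) < 0)"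

lemma minty_descent_empty:
  assumes "f x = {}" "neg_dual_cone T C - {\<lambda>_. 0} \<noteq> {}"
  shows "minty_descent T C f x0 x"
proof -
  obtain g where "g \<in> neg_dual_cone T C - {\<lambda>_. 0}" using assms(2) by blast
  then show ?thesis
    unfolding minty_descent_def
    using scal_phi_empty[of f x g, OF assms(1)] scal_phi_dir_neg_empty[of f x g "x0 - x", OF assms(1)]
    by (intro bexI[of _ g]) auto
qed

lemma open_segment_hull_ne_imp_minty_descent:
  assumes lc: "lc_tvs T" and "cone C" and conv: "set_convex_fun T f" and G: "f x \<in> Gspace T C"
    and "x \<in> sdom f" and z: "z \<in> open_segment_hull T f x0 x" "z \<notin> f x"
  shows "minty_descent T C f x0 x"
proof -
  obtain k0 where "k0 \<in> f x" using \<open>x \<in> sdom f\<close> by (auto simp: sdom_def)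
  obtain g \<delta> where g: "g \<in> topdual T" "\<delta> > 0" and sep: "\<And>k. k \<in> f x \<Longrightarrow> g k \<le> g z - \<delta>"
    using lc_tvs_separation_closed_convex[OF lc Gspace_closedin[OF G]
        set_convex_fun_convex_values[OF lc conv] \<open>k0 \<in> f x\<close> z(2)] by blast
  have "linear g" using g(1) by (simp add: topdual_def)
  text \<open>\<open>g\<close> is bounded above on \<open>f x\<close>, which contains \<open>k\<^sub>0 + C\<close>; so \<open>g \<le> 0\<close> on the cone \<open>C\<close>.\<close>
  have "g c \<le> 0" if "c \<in> C" for c
  proof (rule ccontr)
    assume "\<not> g c \<le> 0"
    define t where "t = (g z - g k0) / g c + 1"
    have "t > 0" using \<open>\<not> g c \<le> 0\<close> sep[OF \<open>k0 \<in> f x\<close>] g(2) by (simp add: t_def add_pos_nonneg)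
    then have "k0 + t *\<^sub>R c \<in> f x"
      using Gspace_add_cone[OF lc G \<open>k0 \<in> f x\<close>] \<open>cone C\<close> that by (simp add: cone_def)
    then have "g (k0 + t *\<^sub>R c) \<le> g z - \<delta>" by (rule sep)
    then have "g k0 + t * g c \<le> g z - \<delta>" using \<open>linear g\<close> by (simp add: linear_add linear_scale)
    moreover have "t * g c = g z - g k0 + g c" using \<open>\<not> g c \<le> 0\<close> by (simp add: t_def field_simps)
    ultimately show False using \<open>\<not> g c \<le> 0\<close> g(2) by simp
  qed
  moreover have "g \<noteq> (\<lambda>_. 0)" using sep[OF \<open>k0 \<in> f x\<close>] g(2) by auto
  ultimately have g_cone: "g \<in> neg_dual_cone T C - {\<lambda>_. 0}"
    using g(1) by (simp add: neg_dual_cone_def)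
  have "ereal (\<delta> - g z) \<le> scal_phi f g x"
    unfolding scal_phi_def
  proof (rule INF_greatest)
    fix k assume "k \<in> f x"
    then show "ereal (\<delta> - g z) \<le> ereal (- g k)" using sep[of k] by simp
  qed
  moreover from this have "scal_phi f g x \<noteq> -\<infinity>" by auto
  then obtain a where a: "scal_phi f g x = ereal a" using \<open>k0 \<in> f x\<close> by (auto elim: scal_phi_real)
  ultimately have "\<delta> - g z \<le> a" by simp
  text \<open>The closed half-space \<open>{g \<le> g z - \<delta>}\<close> misses \<open>z \<in> I(x)\<close>, so it cannot contain every
    \<open>f(x\<^sub>t)\<close>.\<close>
  have "\<exists>t w. 0 < t \<and> t < 1 \<and> w \<in> f (x0 + t *\<^sub>R (x - x0)) \<and> g z - \<delta> < g w"
  proof (rule ccontr)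
    assume "\<not> ?thesis"
    then have "f (x0 + t *\<^sub>R (x - x0)) \<subseteq> {y. g y \<le> g z - \<delta>}" if "0 < t" "t < 1" for t
      using that by (force simp: not_less)
    then have "open_segment_hull T f x0 x \<subseteq> {y. g y \<le> g z - \<delta>}"
      using topdual_halfspace_le[OF lc g(1)] by (intro open_segment_hull_subset_closed_convex)
    then show False using z(1) g(2) by auto
  qed
  then obtain t w where t: "0 < t" "t < 1" and w: "w \<in> f (x0 + t *\<^sub>R (x - x0))" "g z - \<delta> < g w"
    by blast
  have "scal_phi f g (x + (1 - t) *\<^sub>R (x0 - x)) < ereal a"
  proof -
    have "x + (1 - t) *\<^sub>R (x0 - x) = x0 + t *\<^sub>R (x - x0)" by (simp add: algebra_simps)
    then have "scal_phi f g (x + (1 - t) *\<^sub>R (x0 - x)) \<le> ereal (- g w)"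
      using scal_phi_le[of w f _ g] w(1) by simp
    also have "\<dots> < ereal a" using w(2) \<open>\<delta> - g z \<le> a\<close> by simp
    finally show ?thesis .
  qed
  then have "scal_phi_dir f g x (x0 - x) < 0"
    using scal_phi_dir_neg_iff_real[OF a] t(2) by (auto intro: exI[of _ "1 - t"])
  then show ?thesis unfolding minty_descent_def using g_cone a by (intro bexI[of _ g]) auto
qed

theorem mainTheorem14:
  fixes T :: "'z::real_vector topology" and C :: "'z set"
    and f :: "'x::real_vector \<Rightarrow> 'z set" and x0 :: 'x
  assumes "lc_tvs T"
    and "closedin T C" and "convex C" and "cone C" and "0 \<in> C"
    and "neg_dual_cone T C - {\<lambda>_. 0} \<noteq> {}"
    and "\<forall>x. f x \<in> Gspace T C"
    and "set_convex_fun T f"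
    and "x0 \<in> sdom f"
  shows "(\<forall>x. f x \<noteq> f x0 \<longrightarrow>
            (\<exists>g \<in> neg_dual_cone T C - {\<lambda>_. 0}.
               scal_phi f g x \<noteq> -\<infinity> \<and> scal_phi_dir f g x (x0 - x) < 0))
     \<longleftrightarrow>
     (\<forall>x \<in> sdom f. f x \<noteq> f x0 \<longrightarrow>
        (let I = T closure_of (convex hull (\<Union>t\<in>{0<..<1}. f (x0 + t *\<^sub>R (x - x0))))
         in f x \<subseteq> I \<and> I \<noteq> f x))"
proof -
  have subset: "f x \<subseteq> open_segment_hull T f x0 x" for x
    using assms(9) subset_open_segment_hull[OF assms(1,8)] by (auto simp: sdom_def)
  have "minty_descent T C f x0 x \<longleftrightarrow> open_segment_hull T f x0 x \<noteq> f x" if "x \<in> sdom f" for x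
  proof
    assume "minty_descent T C f x0 x"
    then obtain g where "g \<in> neg_dual_cone T C"
      "scal_phi f g x \<noteq> -\<infinity>" "scal_phi_dir f g x (x0 - x) < 0" by (auto simp: minty_descent_def)
    moreover from this(1) have "linear g" by (simp add: neg_dual_cone_def topdual_def)
    ultimately show "open_segment_hull T f x0 x \<noteq> f x"
      using scalar_minty_imp_open_segment_hull_ne[OF assms(1,8) _ that] by blast
  next
    assume "open_segment_hull T f x0 x \<noteq> f x"
    then obtain z where "z \<in> open_segment_hull T f x0 x" "z \<notin> f x" using subset by blast
    then show "minty_descent T C f x0 x"
      using open_segment_hull_ne_imp_minty_descent[OF assms(1,4,8)] assms(7) that by blast
  qed
  moreover have "minty_descent T C f x0 x" if "x \<notin> sdom f" for x
    using that minty_descent_empty[OF _ assms(6)] by (simp add: sdom_def)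
  ultimately show ?thesis
    unfolding Let_def open_segment_hull_def[symmetric] minty_descent_def[symmetric]
    using subset by blast
qed

end
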